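(* Let $(B,D,d,\theta)$ be a crossed module, $A$ an abelian group and $\zeta:\operatorname{Ker}d\to A$ a surjective abstract $\zeta$-kernel of this crossed module. Then there exists a $\zeta$-extension of co-type $B\xrightarrow{d}D$ if and only if the obstruction $\operatorname{Obs}(\zeta)$ vanishes in $H^3(\operatorname{Coker}d,A)$ (with $\operatorname{Coker}d$ acting trivially on $A$).
   Context: A crossed module $(B,D,d,\theta)$: groups $B,D$, homomorphisms $d:B\to D$, $\theta:D\to\operatorname{Aut}B$ with $\theta_{d(b)}(b')=bb'b^{-1}$ and $d(\theta_x(b))=x\,d(b)\,x^{-1}$. Then $\operatorname{Ker}d\subseteq Z(B)$, $d(B)\trianglelefteq D$ and $\operatorname{Ker}d$ is a $\operatorname{Coker}d=D/d(B)$-module via $s\cdot c=\theta_x(c)$, $x\in s$. An abstract $\zeta$-kernel: a homomorphism $\zeta:\operatorname{Ker}d\to A$ ($A$ abelian) with $\zeta(\theta_x(c))=\zeta(c)$ for all $x\in D,c\in\operatorname{Ker}d$. A $\zeta$-extension of co-type $B\xrightarrow{d}D$: an exact sequence of groups $0\to A\xrightarrow{j}E\xrightarrow{p}D\to1$ with $j(A)\subseteq Z(E)$, together with a homomorphism $\beta:B\to E$ such that $p\beta=d$, $\beta(\theta_x b)=e\,\beta(b)\,e^{-1}$ whenever $p(e)=x$, and $j(\zeta(c))=\beta(c)$ for all $c\in\operatorname{Ker}d$. Obstruction: choose representatives $x_s\in D$ of each $s\in\operatorname{Coker}d$ ($x_1=1$) and for each $x$ in class $s$ an element $b_x\in B$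 with $x_s=d(b_x)x$, $b_{x_s}=0$ (writing $B$ additively, not necessarily abelian). Put $\tilde H_{r,s}=-b_{x_rx_s}$ and define $k:(\operatorname{Coker}d)^3\to\operatorname{Ker}d$ by $\theta_{x_s}(\tilde H_{r,t})+\tilde H_{s,rt}+k(s,r,t)=\tilde H_{s,r}+\tilde H_{sr,t}$; $k$ is a 3-cocycle of $\operatorname{Coker}d$ with values in $\operatorname{Ker}d$. Then $\operatorname{Obs}(\zeta)=[\zeta\circ k]\in H^3(\operatorname{Coker}d,A)$. *)

theory Defs
  imports "HOL-Algebra.Algebra"
begin

definition crossed_module ::
  "'b monoid \<Rightarrow> 'd monoid \<Rightarrow> ('b \<Rightarrow> 'd) \<Rightarrow> ('d \<Rightarrow> 'b \<Rightarrow> 'b) \<Rightarrow> bool" where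
  "crossed_module B D d \<theta> \<longleftrightarrow>
     group B \<and> group D \<and> d \<in> hom B D \<and>
     (\<forall>x\<in>carrier D. \<theta> x \<in> iso B B) \<and>
     (\<forall>x\<in>carrier D. \<forall>y\<in>carrier D. \<forall>b\<in>carrier B.
         \<theta> (x \<otimes>\<^bsub>D\<^esub> y) b = \<theta> x (\<theta> y b)) \<and>
     (\<forall>b\<in>carrier B. \<theta> \<one>\<^bsub>D\<^esub> b = b) \<and>
     (\<forall>b\<in>carrier B. \<forall>b'\<in>carrier B.
         \<theta> (d b) b' = b \<otimes>\<^bsub>B\<^esub> b' \<otimes>\<^bsub>B\<^esub> inv\<^bsub>B\<^esub> b) \<and>
     (\<forall>x\<in>carrier D. \<forall>b\<in>carrier B.
         d (\<theta> x b) = x \<otimes>\<^bsub>D\<^esub> d b \<otimes>\<^bsub>D\<^esub> inv\<^bsub>D\<^esub> x)"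

definition Kerd :: "'b monoid \<Rightarrow> 'd monoid \<Rightarrow> ('b \<Rightarrow> 'd) \<Rightarrow> 'b monoid" where
  "Kerd B D d = B\<lparr>carrier := kernel B D d\<rparr>"

definition Coker :: "'b monoid \<Rightarrow> 'd monoid \<Rightarrow> ('b \<Rightarrow> 'd) \<Rightarrow> 'd set monoid" where
  "Coker B D d = D Mod (d ` carrier B)"

definition abstract_kernel ::
  "'b monoid \<Rightarrow> 'd monoid \<Rightarrow> ('b \<Rightarrow> 'd) \<Rightarrow> ('d \<Rightarrow> 'b \<Rightarrow> 'b) \<Rightarrow> 'a monoid \<Rightarrow> ('b \<Rightarrow> 'a) \<Rightarrow> bool" where
  "abstract_kernel B D d \<theta> A \<zeta> \<longleftrightarrow>
     comm_group A \<and> \<zeta> \<in> hom (Kerd B D d) A \<and>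
     (\<forall>x\<in>carrier D. \<forall>c\<in>kernel B D d. \<zeta> (\<theta> x c) = \<zeta> c)"

definition zeta_extension ::
  "'b monoid \<Rightarrow> 'd monoid \<Rightarrow> ('b \<Rightarrow> 'd) \<Rightarrow> ('d \<Rightarrow> 'b \<Rightarrow> 'b) \<Rightarrow> 'a monoid \<Rightarrow> ('b \<Rightarrow> 'a)
   \<Rightarrow> 'e monoid \<Rightarrow> ('a \<Rightarrow> 'e) \<Rightarrow> ('e \<Rightarrow> 'd) \<Rightarrow> ('b \<Rightarrow> 'e) \<Rightarrow> bool" where
  "zeta_extension B D d \<theta> A \<zeta> E j p \<beta> \<longleftrightarrow>
     group E \<and>
     \<comment> \<open>exactness of 0 -> A -> E -> D -> 1\<close>
     j \<in> hom A E \<and> inj_on j (carrier A) \<and>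
     p \<in> hom E D \<and> p ` carrier E = carrier D \<and>
     j ` carrier A = kernel E D p \<and>
     \<comment> \<open>j(A) is central in E\<close>
     (\<forall>a\<in>carrier A. \<forall>e\<in>carrier E. j a \<otimes>\<^bsub>E\<^esub> e = e \<otimes>\<^bsub>E\<^esub> j a) \<and>
     \<comment> \<open>the homomorphism beta\<close>
     \<beta> \<in> hom B E \<and>
     (\<forall>b\<in>carrier B. p (\<beta> b) = d b) \<and>
     (\<forall>e\<in>carrier E. \<forall>b\<in>carrier B.
         \<beta> (\<theta> (p e) b) = e \<otimes>\<^bsub>E\<^esub> \<beta> b \<otimes>\<^bsub>E\<^esub> inv\<^bsub>E\<^esub> e) \<and>
     (\<forall>c\<in>kernel B D d. j (\<zeta> c) = \<beta> c)"

text \<open>Admissible choice data: a representative x_s of each class s in Coker d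
  (with x_1 = 1), and for each x in D an element b_x in B with x_s = d(b_x) x, where s is
  the class of x, and b_{x_s} = 1.\<close>

definition obs_choice ::
  "'b monoid \<Rightarrow> 'd monoid \<Rightarrow> ('b \<Rightarrow> 'd) \<Rightarrow> ('d set \<Rightarrow> 'd) \<Rightarrow> ('d \<Rightarrow> 'b) \<Rightarrow> bool" where
  "obs_choice B D d xs bx \<longleftrightarrow>
     (\<forall>s\<in>carrier (Coker B D d). xs s \<in> s) \<and>
     xs (d ` carrier B) = \<one>\<^bsub>D\<^esub> \<and>
     (\<forall>x\<in>carrier D. bx x \<in> carrier B \<and>
         xs ((d ` carrier B) #>\<^bsub>D\<^esub> x) = d (bx x) \<otimes>\<^bsub>D\<^esub> x) \<and>
     (\<forall>s\<in>carrier (Coker B D d). bx (xs s) = \<one>\<^bsub>B\<^esub>)"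

definition Htil ::
  "'b monoid \<Rightarrow> 'd monoid \<Rightarrow> ('d set \<Rightarrow> 'd) \<Rightarrow> ('d \<Rightarrow> 'b) \<Rightarrow> 'd set \<Rightarrow> 'd set \<Rightarrow> 'b" where
  "Htil B D xs bx r s = inv\<^bsub>B\<^esub> (bx (xs r \<otimes>\<^bsub>D\<^esub> xs s))"

text \<open>The 3-cocycle k, solving
  theta_{x_s}(H_{r,t}) + H_{s,rt} + k(s,r,t) = H_{s,r} + H_{sr,t} (in B, written additively),
  i.e. k(s,r,t) = - H_{s,rt} - theta_{x_s}(H_{r,t}) + H_{s,r} + H_{sr,t}.\<close>

definition obs_k ::
  "'b monoid \<Rightarrow> 'd monoid \<Rightarrow> ('b \<Rightarrow> 'd) \<Rightarrow> ('d \<Rightarrow> 'b \<Rightarrow> 'b) \<Rightarrow> ('d set \<Rightarrow> 'd) \<Rightarrow> ('d \<Rightarrow> 'b)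
   \<Rightarrow> 'd set \<Rightarrow> 'd set \<Rightarrow> 'd set \<Rightarrow> 'b" where
  "obs_k B D d \<theta> xs bx s r t =
     (let Q = Coker B D d; H = Htil B D xs bx in
       inv\<^bsub>B\<^esub> (H s (r \<otimes>\<^bsub>Q\<^esub> t)) \<otimes>\<^bsub>B\<^esub> inv\<^bsub>B\<^esub> (\<theta> (xs s) (H r t))
         \<otimes>\<^bsub>B\<^esub> H s r \<otimes>\<^bsub>B\<^esub> H (s \<otimes>\<^bsub>Q\<^esub> r) t)"

text \<open>A 3-cochain f : Q^3 -> A (trivial action) represents 0 in H^3(Q,A) iff it is a
  coboundary: f(s,r,t) = g(r,t) - g(sr,t) + g(s,rt) - g(s,r) for some 2-cochain g.\<close>

definition coboundary3 :: "'q monoid \<Rightarrow> 'a monoid \<Rightarrow> ('q \<Rightarrow> 'q \<Rightarrow> 'q \<Rightarrow> 'a) \<Rightarrow> bool" where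
  "coboundary3 Q A f \<longleftrightarrow>
     (\<exists>g. (\<forall>r\<in>carrier Q. \<forall>s\<in>carrier Q. g r s \<in> carrier A) \<and>
          (\<forall>s\<in>carrier Q. \<forall>r\<in>carrier Q. \<forall>t\<in>carrier Q.
             f s r t = g r t \<otimes>\<^bsub>A\<^esub> inv\<^bsub>A\<^esub> (g (s \<otimes>\<^bsub>Q\<^esub> r) t)
                        \<otimes>\<^bsub>A\<^esub> g s (r \<otimes>\<^bsub>Q\<^esub> t) \<otimes>\<^bsub>A\<^esub> inv\<^bsub>A\<^esub> (g s r)))"

definition obs_vanishes ::
  "'b monoid \<Rightarrow> 'd monoid \<Rightarrow> ('b \<Rightarrow> 'd) \<Rightarrow> ('d \<Rightarrow> 'b \<Rightarrow> 'b) \<Rightarrow> 'a monoid \<Rightarrow> ('b \<Rightarrow> 'a)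
   \<Rightarrow> ('d set \<Rightarrow> 'd) \<Rightarrow> ('d \<Rightarrow> 'b) \<Rightarrow> bool" where
  "obs_vanishes B D d \<theta> A \<zeta> xs bx \<longleftrightarrow>
     coboundary3 (Coker B D d) A (\<lambda>s r t. \<zeta> (obs_k B D d \<theta> xs bx s r t))"

end

theory Submission
  imports Defs
begin

text \<open>
  Given an extension, lift each representative \<open>x\<^sub>s\<close> to some \<open>u\<^sub>s \<in> E\<close>. Then
  \<open>u\<^sub>r u\<^sub>s = \<beta>(H\<^sub>r\<^sub>,\<^sub>s) u\<^sub>r\<^sub>s j(g(r,s))\<close> for a 2-cochain \<open>g\<close> with values in \<open>A\<close>, and expanding
  \<open>u\<^sub>s u\<^sub>r u\<^sub>t\<close> in the two possible ways gives \<open>\<beta>(k(s,r,t)) = j(\<delta>g(s,r,t))\<close>. As \<open>j\<close> is injective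
  and \<open>j \<circ> \<zeta> = \<beta>\<close> on \<open>Ker d\<close>, this says \<open>\<zeta> \<circ> k = \<delta>g\<close>.

  Conversely, let \<open>\<zeta> \<circ> k = \<delta>g\<close>, where \<open>g\<close> may be taken normalized. Every \<open>x \<in> D\<close> factors as
  \<open>d(c\<^sub>x) x\<^sub>[\<^sub>x\<^sub>]\<close>; multiplying the factorizations of \<open>x\<close> and \<open>y\<close> produces a second coefficient
  for \<open>xy\<close>, which differs from \<open>c\<^sub>x\<^sub>y\<close> by some \<open>\<kappa>(x,y) \<in> Ker d\<close>. Associativity in \<open>D\<close> shows
  that \<open>\<kappa>\<close> fails the cocycle identity exactly by \<open>k\<close>, so \<open>\<phi>(x,y) = \<zeta>(\<kappa>(x,y)) g([x],[y])\<close> is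
  a normalized 2-cocycle of \<open>D\<close> in \<open>A\<close>. The twisted product \<open>A \<times>\<^sub>\<phi> D\<close>, with
  \<open>\<beta>(b) = (\<zeta>(c\<^sub>d\<^sub>b\<inverse> b), d b)\<close>, is the required extension.
\<close>

lemma (in group) inv_mult_cancel_left [simp]:
  "x \<in> carrier G \<Longrightarrow> y \<in> carrier G \<Longrightarrow> inv x \<otimes> (x \<otimes> y) = y"
  by (simp add: m_assoc [symmetric])

lemma (in group) mult_inv_cancel_left [simp]:
  "x \<in> carrier G \<Longrightarrow> y \<in> carrier G \<Longrightarrow> x \<otimes> (inv x \<otimes> y) = y"
  by (simp add: m_assoc [symmetric])

lemma (in group) m_comm_right_central:
  assumes "x \<in> carrier G" "y \<in> carrier G" "z \<in> carrier G" and "z \<otimes> y = y \<otimes> z"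
  shows "x \<otimes> z \<otimes> y = x \<otimes> y \<otimes> z"
  using assms by (simp add: m_assoc)

lemma (in comm_group) coboundary_form_imp_mult_eq:
  assumes "a \<in> carrier G" "b \<in> carrier G" "c \<in> carrier G" "e \<in> carrier G"
    and f: "f = a \<otimes> inv b \<otimes> c \<otimes> inv e"
  shows "f \<otimes> b \<otimes> e = a \<otimes> c"
proof -
  have "f \<otimes> b \<otimes> e = (a \<otimes> c) \<otimes> (inv b \<otimes> b) \<otimes> (inv e \<otimes> e)"
    using assms(1-4) by (simp only: f m_ac m_closed inv_closed)
  also have "\<dots> = a \<otimes> c"
    using assms(1-4) by simp
  finally show ?thesis .
qed

section \<open>Twisted products\<close>

definition normalized_2cocycle :: "'q monoid \<Rightarrow> 'a monoid \<Rightarrow> ('q \<Rightarrow> 'q \<Rightarrow> 'a) \<Rightarrow> bool" where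
  "normalized_2cocycle Q A \<phi> \<longleftrightarrow>
     (\<forall>x\<in>carrier Q. \<forall>y\<in>carrier Q. \<phi> x y \<in> carrier A) \<and>
     (\<forall>x\<in>carrier Q. \<phi> \<one>\<^bsub>Q\<^esub> x = \<one>\<^bsub>A\<^esub> \<and> \<phi> x \<one>\<^bsub>Q\<^esub> = \<one>\<^bsub>A\<^esub>) \<and>
     (\<forall>x\<in>carrier Q. \<forall>y\<in>carrier Q. \<forall>z\<in>carrier Q.
        \<phi> x y \<otimes>\<^bsub>A\<^esub> \<phi> (x \<otimes>\<^bsub>Q\<^esub> y) z = \<phi> y z \<otimes>\<^bsub>A\<^esub> \<phi> x (y \<otimes>\<^bsub>Q\<^esub> z))"

definition twisted_product :: "'a monoid \<Rightarrow> 'q monoid \<Rightarrow> ('q \<Rightarrow> 'q \<Rightarrow> 'a) \<Rightarrow> ('a \<times> 'q) monoid" where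
  "twisted_product A Q \<phi> =
     \<lparr>carrier = carrier A \<times> carrier Q,
      monoid.mult = (\<lambda>e f. (fst e \<otimes>\<^bsub>A\<^esub> fst f \<otimes>\<^bsub>A\<^esub> \<phi> (snd e) (snd f), snd e \<otimes>\<^bsub>Q\<^esub> snd f)),
      one = (\<one>\<^bsub>A\<^esub>, \<one>\<^bsub>Q\<^esub>)\<rparr>"

lemma twisted_product_carrier [simp]: "carrier (twisted_product A Q \<phi>) = carrier A \<times> carrier Q"
  and twisted_product_mult [simp]:
    "(a, x) \<otimes>\<^bsub>twisted_product A Q \<phi>\<^esub> (b, y) = (a \<otimes>\<^bsub>A\<^esub> b \<otimes>\<^bsub>A\<^esub> \<phi> x y, x \<otimes>\<^bsub>Q\<^esub> y)"
  and twisted_product_one [simp]: "\<one>\<^bsub>twisted_product A Q \<phi>\<^esub> = (\<one>\<^bsub>A\<^esub>, \<one>\<^bsub>Q\<^esub>)"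
  by (simp_all add: twisted_product_def)

lemma group_twisted_product:
  assumes A: "comm_group A" and Q: "group Q" and \<phi>: "normalized_2cocycle Q A \<phi>"
  shows "group (twisted_product A Q \<phi>)"
proof -
  interpret A: comm_group A by (rule A)
  interpret Q: group Q by (rule Q)
  have closed [simp]: "\<phi> x y \<in> carrier A" if "x \<in> carrier Q" "y \<in> carrier Q" for x y
    using \<phi> that unfolding normalized_2cocycle_def by blast
  have one_left [simp]: "\<phi> \<one>\<^bsub>Q\<^esub> x = \<one>\<^bsub>A\<^esub>" if "x \<in> carrier Q" for x
    using \<phi> that unfolding normalized_2cocycle_def by blast
  have identity: "\<phi> x y \<otimes>\<^bsub>A\<^esub> \<phi> (x \<otimes>\<^bsub>Q\<^esub> y) z = \<phi> y z \<otimes>\<^bsub>A\<^esub> \<phi> x (y \<otimes>\<^bsub>Q\<^esub> z)"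
    if "x \<in> carrier Q" "y \<in> carrier Q" "z \<in> carrier Q" for x y z
    using \<phi> that unfolding normalized_2cocycle_def by blast
  show ?thesis
  proof (rule groupI)
    fix e f h
    assume "e \<in> carrier (twisted_product A Q \<phi>)" "f \<in> carrier (twisted_product A Q \<phi>)"
      "h \<in> carrier (twisted_product A Q \<phi>)"
    then obtain a x b y c z where e: "e = (a, x)" "f = (b, y)" "h = (c, z)"
      and m: "a \<in> carrier A" "x \<in> carrier Q" "b \<in> carrier A" "y \<in> carrier Q"
        "c \<in> carrier A" "z \<in> carrier Q"
      by auto
    have "a \<otimes>\<^bsub>A\<^esub> b \<otimes>\<^bsub>A\<^esub> \<phi> x y \<otimes>\<^bsub>A\<^esub> c \<otimes>\<^bsub>A\<^esub> \<phi> (x \<otimes>\<^bsub>Q\<^esub> y) z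
        = a \<otimes>\<^bsub>A\<^esub> b \<otimes>\<^bsub>A\<^esub> c \<otimes>\<^bsub>A\<^esub> (\<phi> x y \<otimes>\<^bsub>A\<^esub> \<phi> (x \<otimes>\<^bsub>Q\<^esub> y) z)"
      using m by (simp add: A.m_ac)
    also have "\<dots> = a \<otimes>\<^bsub>A\<^esub> (b \<otimes>\<^bsub>A\<^esub> c \<otimes>\<^bsub>A\<^esub> \<phi> y z) \<otimes>\<^bsub>A\<^esub> \<phi> x (y \<otimes>\<^bsub>Q\<^esub> z)"
      using m by (simp add: identity A.m_ac)
    finally show "e \<otimes>\<^bsub>twisted_product A Q \<phi>\<^esub> f \<otimes>\<^bsub>twisted_product A Q \<phi>\<^esub> h
        = e \<otimes>\<^bsub>twisted_product A Q \<phi>\<^esub> (f \<otimes>\<^bsub>twisted_product A Q \<phi>\<^esub> h)"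
      using m by (simp add: e Q.m_assoc)
  next
    fix e assume "e \<in> carrier (twisted_product A Q \<phi>)"
    then obtain a x where e: "e = (a, x)" and m: "a \<in> carrier A" "x \<in> carrier Q" by auto
    define a' where "a' = inv\<^bsub>A\<^esub> a \<otimes>\<^bsub>A\<^esub> inv\<^bsub>A\<^esub> (\<phi> (inv\<^bsub>Q\<^esub> x) x)"
    have "a' \<otimes>\<^bsub>A\<^esub> a \<otimes>\<^bsub>A\<^esub> \<phi> (inv\<^bsub>Q\<^esub> x) x = \<one>\<^bsub>A\<^esub>"
      using m by (simp add: a'_def A.m_ac)
    moreover have "a' \<in> carrier A" using m by (simp add: a'_def)
    ultimately show "\<exists>f \<in> carrier (twisted_product A Q \<phi>). f \<otimes>\<^bsub>twisted_product A Q \<phi>\<^esub> e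
        = \<one>\<^bsub>twisted_product A Q \<phi>\<^esub>"
      using m by (intro bexI[of _ "(a', inv\<^bsub>Q\<^esub> x)"]) (auto simp: e)
  qed (auto simp: twisted_product_def)
qed


section \<open>Normalized trivializations of 3-coboundaries\<close>

lemma coboundary3_normalize:
  assumes Q: "group Q" and A: "comm_group A" and f: "coboundary3 Q A f"
    and f_one_one_left: "\<And>t. t \<in> carrier Q \<Longrightarrow> f \<one>\<^bsub>Q\<^esub> \<one>\<^bsub>Q\<^esub> t = \<one>\<^bsub>A\<^esub>"
    and f_one_one_right: "\<And>t. t \<in> carrier Q \<Longrightarrow> f t \<one>\<^bsub>Q\<^esub> \<one>\<^bsub>Q\<^esub> = \<one>\<^bsub>A\<^esub>"
  obtains g where "\<And>r s. r \<in> carrier Q \<Longrightarrow> s \<in> carrier Q \<Longrightarrow> g r s \<in> carrier A"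
    and "\<And>t. t \<in> carrier Q \<Longrightarrow> g \<one>\<^bsub>Q\<^esub> t = \<one>\<^bsub>A\<^esub>"
    and "\<And>t. t \<in> carrier Q \<Longrightarrow> g t \<one>\<^bsub>Q\<^esub> = \<one>\<^bsub>A\<^esub>"
    and "\<And>s r t. s \<in> carrier Q \<Longrightarrow> r \<in> carrier Q \<Longrightarrow> t \<in> carrier Q \<Longrightarrow>
           f s r t \<otimes>\<^bsub>A\<^esub> g (s \<otimes>\<^bsub>Q\<^esub> r) t \<otimes>\<^bsub>A\<^esub> g s r = g r t \<otimes>\<^bsub>A\<^esub> g s (r \<otimes>\<^bsub>Q\<^esub> t)"
proof -
  interpret Q: group Q by (rule Q)
  interpret A: comm_group A by (rule A)
  obtain g0 where g0: "\<And>r s. r \<in> carrier Q \<Longrightarrow> s \<in> carrier Q \<Longrightarrow> g0 r s \<in> carrier A"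
    and f_eq: "\<And>s r t. s \<in> carrier Q \<Longrightarrow> r \<in> carrier Q \<Longrightarrow> t \<in> carrier Q \<Longrightarrow>
      f s r t = g0 r t \<otimes>\<^bsub>A\<^esub> inv\<^bsub>A\<^esub> (g0 (s \<otimes>\<^bsub>Q\<^esub> r) t) \<otimes>\<^bsub>A\<^esub> g0 s (r \<otimes>\<^bsub>Q\<^esub> t) \<otimes>\<^bsub>A\<^esub> inv\<^bsub>A\<^esub> (g0 s r)"
    using f unfolding coboundary3_def by blast
  have f_closed: "f s r t \<in> carrier A"
    if "s \<in> carrier Q" "r \<in> carrier Q" "t \<in> carrier Q" for s r t
    using that by (simp add: f_eq g0)
  have f_mult: "f s r t \<otimes>\<^bsub>A\<^esub> g0 (s \<otimes>\<^bsub>Q\<^esub> r) t \<otimes>\<^bsub>A\<^esub> g0 s r = g0 r t \<otimes>\<^bsub>A\<^esub> g0 s (r \<otimes>\<^bsub>Q\<^esub> t)"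
    if "s \<in> carrier Q" "r \<in> carrier Q" "t \<in> carrier Q" for s r t
    using that by (intro A.coboundary_form_imp_mult_eq f_eq) (simp_all add: g0)
  define c where "c = g0 \<one>\<^bsub>Q\<^esub> \<one>\<^bsub>Q\<^esub>"
  have c: "c \<in> carrier A" by (simp add: c_def g0)
  \<comment> \<open>the coboundary identity at \<open>(1,1,t)\<close> and \<open>(t,1,1)\<close> makes \<open>g0\<close> constant on \<open>1 \<times> Q \<union> Q \<times> 1\<close>\<close>
  have g0_one_left: "g0 \<one>\<^bsub>Q\<^esub> t = c" if t: "t \<in> carrier Q" for t
    using f_mult[of "\<one>\<^bsub>Q\<^esub>" "\<one>\<^bsub>Q\<^esub>" t] t by (simp add: f_one_one_left c_def g0)
  have g0_one_right: "g0 t \<one>\<^bsub>Q\<^esub> = c" if t: "t \<in> carrier Q" for t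
    using f_mult[of t "\<one>\<^bsub>Q\<^esub>" "\<one>\<^bsub>Q\<^esub>"] t by (simp add: f_one_one_right c_def g0 A.m_comm)
  show ?thesis
  proof
    fix s r t assume "s \<in> carrier Q" "r \<in> carrier Q" "t \<in> carrier Q"
    with f_mult[of s r t] show "f s r t \<otimes>\<^bsub>A\<^esub> (g0 (s \<otimes>\<^bsub>Q\<^esub> r) t \<otimes>\<^bsub>A\<^esub> inv\<^bsub>A\<^esub> c) \<otimes>\<^bsub>A\<^esub> (g0 s r \<otimes>\<^bsub>A\<^esub> inv\<^bsub>A\<^esub> c)
        = (g0 r t \<otimes>\<^bsub>A\<^esub> inv\<^bsub>A\<^esub> c) \<otimes>\<^bsub>A\<^esub> (g0 s (r \<otimes>\<^bsub>Q\<^esub> t) \<otimes>\<^bsub>A\<^esub> inv\<^bsub>A\<^esub> c)"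
      using c by (simp add: A.m_ac f_closed g0)
  qed (simp_all add: g0 c g0_one_left g0_one_right)
qed


section \<open>Crossed modules with choice data\<close>

locale obstruction_data =
  fixes B :: "'b monoid" and D :: "'d monoid" and d :: "'b \<Rightarrow> 'd"
    and \<theta> :: "'d \<Rightarrow> 'b \<Rightarrow> 'b" and A :: "'a monoid" and \<zeta> :: "'b \<Rightarrow> 'a"
    and xs :: "'d set \<Rightarrow> 'd" and bx :: "'d \<Rightarrow> 'b"
  assumes crossed_module: "crossed_module B D d \<theta>"
    and abstract_kernel: "abstract_kernel B D d \<theta> A \<zeta>"
    and obs_choice: "obs_choice B D d xs bx"
begin

lemma group_B: "group B" and group_D: "group D" and d_hom: "d \<in> hom B D"
  and \<theta>_iso: "\<And>x. x \<in> carrier D \<Longrightarrow> \<theta> x \<in> iso B B"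
  and \<theta>_compose: "\<And>x y b. x \<in> carrier D \<Longrightarrow> y \<in> carrier D \<Longrightarrow> b \<in> carrier B \<Longrightarrow>
        \<theta> (x \<otimes>\<^bsub>D\<^esub> y) b = \<theta> x (\<theta> y b)"
  and \<theta>_one_left: "\<And>b. b \<in> carrier B \<Longrightarrow> \<theta> \<one>\<^bsub>D\<^esub> b = b"
  and \<theta>_d: "\<And>b b'. b \<in> carrier B \<Longrightarrow> b' \<in> carrier B \<Longrightarrow>
        \<theta> (d b) b' = b \<otimes>\<^bsub>B\<^esub> b' \<otimes>\<^bsub>B\<^esub> inv\<^bsub>B\<^esub> b"
  and d_\<theta>: "\<And>x b. x \<in> carrier D \<Longrightarrow> b \<in> carrier B \<Longrightarrow>
        d (\<theta> x b) = x \<otimes>\<^bsub>D\<^esub> d b \<otimes>\<^bsub>D\<^esub> inv\<^bsub>D\<^esub> x"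
  using crossed_module unfolding crossed_module_def by auto

lemma comm_group_A: "comm_group A" and \<zeta>_hom: "\<zeta> \<in> hom (Kerd B D d) A"
  and \<zeta>_\<theta>: "\<And>x c. x \<in> carrier D \<Longrightarrow> c \<in> kernel B D d \<Longrightarrow> \<zeta> (\<theta> x c) = \<zeta> c"
  using abstract_kernel unfolding abstract_kernel_def by auto

sublocale B: group B by (rule group_B)
sublocale D: group D by (rule group_D)
sublocale A: comm_group A by (rule comm_group_A)
sublocale d: group_hom B D d
  by (simp add: group_hom_def group_hom_axioms_def group_B group_D d_hom)

lemma \<theta>_group_hom: "x \<in> carrier D \<Longrightarrow> group_hom B B (\<theta> x)"
  using \<theta>_iso[of x] by (simp add: group_hom_def group_hom_axioms_def group_B iso_imp_homomorphism)

lemma \<theta>_closed [simp]: "x \<in> carrier D \<Longrightarrow> b \<in> carrier B \<Longrightarrow> \<theta> x b \<in> carrier B"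
  by (rule group_hom.hom_closed[OF \<theta>_group_hom])

lemma \<theta>_mult [simp]: "x \<in> carrier D \<Longrightarrow> b \<in> carrier B \<Longrightarrow> b' \<in> carrier B \<Longrightarrow>
    \<theta> x (b \<otimes>\<^bsub>B\<^esub> b') = \<theta> x b \<otimes>\<^bsub>B\<^esub> \<theta> x b'"
  by (rule group_hom.hom_mult[OF \<theta>_group_hom])

lemma \<theta>_inv [simp]: "x \<in> carrier D \<Longrightarrow> b \<in> carrier B \<Longrightarrow> \<theta> x (inv\<^bsub>B\<^esub> b) = inv\<^bsub>B\<^esub> (\<theta> x b)"
  by (rule group_hom.hom_inv[OF \<theta>_group_hom])

lemma \<theta>_one [simp]: "x \<in> carrier D \<Longrightarrow> \<theta> x \<one>\<^bsub>B\<^esub> = \<one>\<^bsub>B\<^esub>"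
  by (rule group_hom.hom_one[OF \<theta>_group_hom])

abbreviation K where "K \<equiv> kernel B D d"

lemma kernel_iff: "c \<in> K \<longleftrightarrow> c \<in> carrier B \<and> d c = \<one>\<^bsub>D\<^esub>"
  by (simp add: kernel_def)

lemma kernel_central: "c \<in> K \<Longrightarrow> b \<in> carrier B \<Longrightarrow> c \<otimes>\<^bsub>B\<^esub> b = b \<otimes>\<^bsub>B\<^esub> c"
  using \<theta>_d[of c b] \<theta>_one_left[of b] B.inv_solve_right[of b "c \<otimes>\<^bsub>B\<^esub> b" c]
  by (simp add: kernel_iff)

lemma kernel_\<theta>_closed: "x \<in> carrier D \<Longrightarrow> c \<in> K \<Longrightarrow> \<theta> x c \<in> K"
  by (simp add: kernel_iff d_\<theta>)

lemma \<zeta>_closed: "c \<in> K \<Longrightarrow> \<zeta> c \<in> carrier A"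
  and \<zeta>_mult: "c \<in> K \<Longrightarrow> c' \<in> K \<Longrightarrow> \<zeta> (c \<otimes>\<^bsub>B\<^esub> c') = \<zeta> c \<otimes>\<^bsub>A\<^esub> \<zeta> c'"
  using \<zeta>_hom by (auto simp: hom_def Kerd_def)

lemma \<zeta>_one: "\<zeta> \<one>\<^bsub>B\<^esub> = \<one>\<^bsub>A\<^esub>"
  using \<zeta>_mult[of "\<one>\<^bsub>B\<^esub>" "\<one>\<^bsub>B\<^esub>"] \<zeta>_closed[of "\<one>\<^bsub>B\<^esub>"] by (simp add: kernel_iff)

abbreviation N where "N \<equiv> d ` carrier B"
abbreviation Q where "Q \<equiv> Coker B D d"

definition cls :: "'d \<Rightarrow> 'd set" where
  "cls x = N #>\<^bsub>D\<^esub> x"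

definition coeff :: "'d \<Rightarrow> 'b" where
  "coeff x = inv\<^bsub>B\<^esub> (bx x)"

lemma image_normal: "N \<lhd> D"
proof (rule D.normal_invI[OF d.img_is_subgroup])
  fix x h assume x: "x \<in> carrier D" and h: "h \<in> N"
  then obtain b where b: "b \<in> carrier B" "h = d b" by blast
  then have "x \<otimes>\<^bsub>D\<^esub> h \<otimes>\<^bsub>D\<^esub> inv\<^bsub>D\<^esub> x = d (\<theta> x b)" using x by (simp add: d_\<theta>)
  then show "x \<otimes>\<^bsub>D\<^esub> h \<otimes>\<^bsub>D\<^esub> inv\<^bsub>D\<^esub> x \<in> N" using x b by simp
qed

sublocale N: normal N D by (rule image_normal)

sublocale Q: group Q
  unfolding Coker_def by (rule N.factorgroup_is_group)

lemma Q_mult: "S \<otimes>\<^bsub>Q\<^esub> T = S <#>\<^bsub>D\<^esub> T"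
  and Q_one: "\<one>\<^bsub>Q\<^esub> = N"
  and Q_carrier: "carrier Q = rcosets\<^bsub>D\<^esub> N"
  by (simp_all add: Coker_def FactGroup_def)

lemma cls_closed [simp]: "x \<in> carrier D \<Longrightarrow> cls x \<in> carrier Q"
  unfolding Q_carrier cls_def using D.rcosetsI N.subset by blast

lemma cls_mult: "x \<in> carrier D \<Longrightarrow> y \<in> carrier D \<Longrightarrow> cls (x \<otimes>\<^bsub>D\<^esub> y) = cls x \<otimes>\<^bsub>Q\<^esub> cls y"
  unfolding Q_mult cls_def by (simp add: N.rcos_sum)

lemma cls_d [simp]: "b \<in> carrier B \<Longrightarrow> cls (d b) = \<one>\<^bsub>Q\<^esub>"
  unfolding cls_def Q_one using D.coset_join2[of "d b" N] N.subgroup_axioms by simp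

lemma cls_one [simp]: "cls \<one>\<^bsub>D\<^esub> = \<one>\<^bsub>Q\<^esub>"
  using cls_d[of "\<one>\<^bsub>B\<^esub>"] by simp

lemma Q_cases:
  assumes "S \<in> carrier Q" obtains x where "x \<in> carrier D" "S = cls x"
  using assms unfolding Q_carrier cls_def RCOSETS_def by blast

lemma xs_mem: "S \<in> carrier Q \<Longrightarrow> xs S \<in> S"
  and xs_one [simp]: "xs \<one>\<^bsub>Q\<^esub> = \<one>\<^bsub>D\<^esub>"
  and bx_closed: "x \<in> carrier D \<Longrightarrow> bx x \<in> carrier B"
  and xs_cls: "x \<in> carrier D \<Longrightarrow> xs (cls x) = d (bx x) \<otimes>\<^bsub>D\<^esub> x"
  and bx_xs: "S \<in> carrier Q \<Longrightarrow> bx (xs S) = \<one>\<^bsub>B\<^esub>"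
  using obs_choice unfolding obs_choice_def cls_def Q_one by blast+

lemma xs_closed [simp]: "S \<in> carrier Q \<Longrightarrow> xs S \<in> carrier D"
  by (metis Q_cases xs_mem N.subset D.r_coset_subset_G cls_def subsetD)

lemma cls_xs [simp]: "S \<in> carrier Q \<Longrightarrow> cls (xs S) = S"
  by (metis Q_cases xs_mem D.repr_independence N.subgroup_axioms cls_def)

lemma coeff_closed [simp]: "x \<in> carrier D \<Longrightarrow> coeff x \<in> carrier B"
  by (simp add: coeff_def bx_closed)

lemma coeff_xs [simp]: "S \<in> carrier Q \<Longrightarrow> coeff (xs S) = \<one>\<^bsub>B\<^esub>"
  by (simp add: coeff_def bx_xs)

lemma coeff_one [simp]: "coeff \<one>\<^bsub>D\<^esub> = \<one>\<^bsub>B\<^esub>"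
  using coeff_xs[of "\<one>\<^bsub>Q\<^esub>"] by simp

lemma coeff_factor: "x \<in> carrier D \<Longrightarrow> d (coeff x) \<otimes>\<^bsub>D\<^esub> xs (cls x) = x"
  by (simp add: coeff_def xs_cls bx_closed D.m_assoc [symmetric])

lemma d_coeff: "x \<in> carrier D \<Longrightarrow> d (coeff x) = x \<otimes>\<^bsub>D\<^esub> inv\<^bsub>D\<^esub> (xs (cls x))"
  using coeff_factor[of x] by (simp add: D.inv_solve_right)

lemma coeff_d_kernel: "b \<in> carrier B \<Longrightarrow> inv\<^bsub>B\<^esub> (coeff (d b)) \<otimes>\<^bsub>B\<^esub> b \<in> K"
  using d_coeff[of "d b"] by (simp add: kernel_iff)

lemma \<theta>_coeff: "x \<in> carrier D \<Longrightarrow> b \<in> carrier B \<Longrightarrow>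
    \<theta> x b = coeff x \<otimes>\<^bsub>B\<^esub> \<theta> (xs (cls x)) b \<otimes>\<^bsub>B\<^esub> inv\<^bsub>B\<^esub> (coeff x)"
  using coeff_factor[of x] \<theta>_compose[of "d (coeff x)" "xs (cls x)" b] by (simp add: \<theta>_d)

abbreviation H where "H \<equiv> Htil B D xs bx"

lemma Htil_eq_coeff: "H S T = coeff (xs S \<otimes>\<^bsub>D\<^esub> xs T)"
  by (simp add: Htil_def coeff_def)

lemma cls_xs_mult [simp]: "S \<in> carrier Q \<Longrightarrow> T \<in> carrier Q \<Longrightarrow> cls (xs S \<otimes>\<^bsub>D\<^esub> xs T) = S \<otimes>\<^bsub>Q\<^esub> T"
  by (simp add: cls_mult)

lemma Htil_closed [simp]: "S \<in> carrier Q \<Longrightarrow> T \<in> carrier Q \<Longrightarrow> H S T \<in> carrier B"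
  by (simp add: Htil_eq_coeff)

lemma Htil_one_left [simp]: "T \<in> carrier Q \<Longrightarrow> H \<one>\<^bsub>Q\<^esub> T = \<one>\<^bsub>B\<^esub>"
  and Htil_one_right [simp]: "T \<in> carrier Q \<Longrightarrow> H T \<one>\<^bsub>Q\<^esub> = \<one>\<^bsub>B\<^esub>"
  by (simp_all add: Htil_eq_coeff)

lemma d_Htil: "S \<in> carrier Q \<Longrightarrow> T \<in> carrier Q \<Longrightarrow>
    d (H S T) = xs S \<otimes>\<^bsub>D\<^esub> xs T \<otimes>\<^bsub>D\<^esub> inv\<^bsub>D\<^esub> (xs (S \<otimes>\<^bsub>Q\<^esub> T))"
  by (simp add: Htil_eq_coeff d_coeff)

lemma \<theta>_xs_mult:
  assumes "S \<in> carrier Q" "T \<in> carrier Q" "b \<in> carrier B"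
  shows "\<theta> (xs S) (\<theta> (xs T) b) \<otimes>\<^bsub>B\<^esub> H S T = H S T \<otimes>\<^bsub>B\<^esub> \<theta> (xs (S \<otimes>\<^bsub>Q\<^esub> T)) b"
  using assms \<theta>_coeff[of "xs S \<otimes>\<^bsub>D\<^esub> xs T" b]
  by (simp add: \<theta>_compose [symmetric] Htil_eq_coeff [symmetric] B.m_assoc)

abbreviation k where "k \<equiv> obs_k B D d \<theta> xs bx"

lemma obs_k_kernel: "S \<in> carrier Q \<Longrightarrow> R \<in> carrier Q \<Longrightarrow> T \<in> carrier Q \<Longrightarrow> k S R T \<in> K"
  unfolding obs_k_def Let_def kernel_iff
  by (simp add: d_Htil d_\<theta> D.inv_mult_group D.m_assoc Q.m_assoc)

lemma obs_k_defining_eq: "S \<in> carrier Q \<Longrightarrow> R \<in> carrier Q \<Longrightarrow> T \<in> carrier Q \<Longrightarrow>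
    \<theta> (xs S) (H R T) \<otimes>\<^bsub>B\<^esub> H S (R \<otimes>\<^bsub>Q\<^esub> T) \<otimes>\<^bsub>B\<^esub> k S R T = H S R \<otimes>\<^bsub>B\<^esub> H (S \<otimes>\<^bsub>Q\<^esub> R) T"
  unfolding obs_k_def Let_def by (simp add: B.m_assoc)

lemma obs_k_one_one_left: "T \<in> carrier Q \<Longrightarrow> k \<one>\<^bsub>Q\<^esub> \<one>\<^bsub>Q\<^esub> T = \<one>\<^bsub>B\<^esub>"
  and obs_k_one_one_right: "T \<in> carrier Q \<Longrightarrow> k T \<one>\<^bsub>Q\<^esub> \<one>\<^bsub>Q\<^esub> = \<one>\<^bsub>B\<^esub>"
  unfolding obs_k_def Let_def by (simp_all add: \<theta>_one_left)

end

section \<open>An extension trivializes the obstruction\<close>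

locale obstruction_extension = obstruction_data B D d \<theta> A \<zeta> xs bx
  for B :: "'b monoid" and D :: "'d monoid" and d :: "'b \<Rightarrow> 'd"
    and \<theta> :: "'d \<Rightarrow> 'b \<Rightarrow> 'b" and A :: "'a monoid" and \<zeta> :: "'b \<Rightarrow> 'a"
    and xs :: "'d set \<Rightarrow> 'd" and bx :: "'d \<Rightarrow> 'b" +
  fixes E :: "'e monoid" and j :: "'a \<Rightarrow> 'e" and p :: "'e \<Rightarrow> 'd" and \<beta> :: "'b \<Rightarrow> 'e"
  assumes zeta_extension: "zeta_extension B D d \<theta> A \<zeta> E j p \<beta>"
begin

lemma group_E: "group E" and j_hom: "j \<in> hom A E" and j_inj: "inj_on j (carrier A)"
  and p_hom: "p \<in> hom E D" and p_surj: "p ` carrier E = carrier D"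
  and j_image: "j ` carrier A = kernel E D p"
  and j_central: "\<And>a e. a \<in> carrier A \<Longrightarrow> e \<in> carrier E \<Longrightarrow> j a \<otimes>\<^bsub>E\<^esub> e = e \<otimes>\<^bsub>E\<^esub> j a"
  and \<beta>_hom: "\<beta> \<in> hom B E"
  and p_\<beta>: "\<And>b. b \<in> carrier B \<Longrightarrow> p (\<beta> b) = d b"
  and \<beta>_\<theta>: "\<And>e b. e \<in> carrier E \<Longrightarrow> b \<in> carrier B \<Longrightarrow>
        \<beta> (\<theta> (p e) b) = e \<otimes>\<^bsub>E\<^esub> \<beta> b \<otimes>\<^bsub>E\<^esub> inv\<^bsub>E\<^esub> e"
  and j_\<zeta>: "\<And>c. c \<in> K \<Longrightarrow> j (\<zeta> c) = \<beta> c"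
  using zeta_extension unfolding zeta_extension_def by auto

sublocale E: group E by (rule group_E)
sublocale j: group_hom A E j
  by (simp add: group_hom_def group_hom_axioms_def A.is_group group_E j_hom)
sublocale p: group_hom E D p
  by (simp add: group_hom_def group_hom_axioms_def group_D group_E p_hom)
sublocale \<beta>: group_hom B E \<beta>
  by (simp add: group_hom_def group_hom_axioms_def group_B group_E \<beta>_hom)

definition lift :: "'d set \<Rightarrow> 'e" where
  "lift S = (SOME e. e \<in> carrier E \<and> p e = xs S)"

lemma lift_closed [simp]: "S \<in> carrier Q \<Longrightarrow> lift S \<in> carrier E"
  and p_lift [simp]: "S \<in> carrier Q \<Longrightarrow> p (lift S) = xs S"
proof -
  assume "S \<in> carrier Q"
  then have "\<exists>e. e \<in> carrier E \<and> p e = xs S" using p_surj xs_closed by (metis imageE)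
  then have "lift S \<in> carrier E \<and> p (lift S) = xs S" unfolding lift_def by (rule someI_ex)
  then show "lift S \<in> carrier E" "p (lift S) = xs S" by simp_all
qed

definition factor_set :: "'d set \<Rightarrow> 'd set \<Rightarrow> 'a" where
  "factor_set S T = (SOME a. a \<in> carrier A \<and>
     j a = inv\<^bsub>E\<^esub> (\<beta> (H S T) \<otimes>\<^bsub>E\<^esub> lift (S \<otimes>\<^bsub>Q\<^esub> T)) \<otimes>\<^bsub>E\<^esub> (lift S \<otimes>\<^bsub>E\<^esub> lift T))"

lemma factor_set_closed [simp]: "S \<in> carrier Q \<Longrightarrow> T \<in> carrier Q \<Longrightarrow> factor_set S T \<in> carrier A"
  and lift_mult: "S \<in> carrier Q \<Longrightarrow> T \<in> carrier Q \<Longrightarrow>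
    lift S \<otimes>\<^bsub>E\<^esub> lift T = \<beta> (H S T) \<otimes>\<^bsub>E\<^esub> lift (S \<otimes>\<^bsub>Q\<^esub> T) \<otimes>\<^bsub>E\<^esub> j (factor_set S T)"
proof -
  assume S: "S \<in> carrier Q" and T: "T \<in> carrier Q"
  define w where "w = \<beta> (H S T) \<otimes>\<^bsub>E\<^esub> lift (S \<otimes>\<^bsub>Q\<^esub> T)"
  have w: "w \<in> carrier E" using S T by (simp add: w_def)
  have "p (inv\<^bsub>E\<^esub> w \<otimes>\<^bsub>E\<^esub> (lift S \<otimes>\<^bsub>E\<^esub> lift T)) = \<one>\<^bsub>D\<^esub>"
    using S T by (simp add: w_def p_\<beta> d_Htil D.inv_mult_group D.m_assoc)
  then have "inv\<^bsub>E\<^esub> w \<otimes>\<^bsub>E\<^esub> (lift S \<otimes>\<^bsub>E\<^esub> lift T) \<in> j ` carrier A"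
    using S T w by (simp add: j_image kernel_def)
  then have "\<exists>a. a \<in> carrier A \<and> j a = inv\<^bsub>E\<^esub> w \<otimes>\<^bsub>E\<^esub> (lift S \<otimes>\<^bsub>E\<^esub> lift T)" by force
  then have "factor_set S T \<in> carrier A \<and> j (factor_set S T) = inv\<^bsub>E\<^esub> w \<otimes>\<^bsub>E\<^esub> (lift S \<otimes>\<^bsub>E\<^esub> lift T)"
    unfolding factor_set_def w_def by (rule someI_ex)
  then show "factor_set S T \<in> carrier A"
    and "lift S \<otimes>\<^bsub>E\<^esub> lift T = \<beta> (H S T) \<otimes>\<^bsub>E\<^esub> lift (S \<otimes>\<^bsub>Q\<^esub> T) \<otimes>\<^bsub>E\<^esub> j (factor_set S T)"
    using S T w by (simp_all add: w_def [symmetric] E.m_assoc)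
qed

lemma lift_mult_\<beta>: "S \<in> carrier Q \<Longrightarrow> b \<in> carrier B \<Longrightarrow>
    lift S \<otimes>\<^bsub>E\<^esub> \<beta> b = \<beta> (\<theta> (xs S) b) \<otimes>\<^bsub>E\<^esub> lift S"
  using \<beta>_\<theta>[of "lift S" b] by (simp add: E.m_assoc)

lemma lift_triple_left:
  assumes S: "S \<in> carrier Q" and R: "R \<in> carrier Q" and T: "T \<in> carrier Q"
  shows "lift S \<otimes>\<^bsub>E\<^esub> lift R \<otimes>\<^bsub>E\<^esub> lift T
    = \<beta> (H S R \<otimes>\<^bsub>B\<^esub> H (S \<otimes>\<^bsub>Q\<^esub> R) T) \<otimes>\<^bsub>E\<^esub> lift (S \<otimes>\<^bsub>Q\<^esub> R \<otimes>\<^bsub>Q\<^esub> T)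
      \<otimes>\<^bsub>E\<^esub> j (factor_set S R \<otimes>\<^bsub>A\<^esub> factor_set (S \<otimes>\<^bsub>Q\<^esub> R) T)"
proof -
  have SR: "S \<otimes>\<^bsub>Q\<^esub> R \<in> carrier Q" using S R by simp
  have "lift S \<otimes>\<^bsub>E\<^esub> lift R \<otimes>\<^bsub>E\<^esub> lift T
      = \<beta> (H S R) \<otimes>\<^bsub>E\<^esub> lift (S \<otimes>\<^bsub>Q\<^esub> R) \<otimes>\<^bsub>E\<^esub> j (factor_set S R) \<otimes>\<^bsub>E\<^esub> lift T"
    using S R by (simp add: lift_mult)
  also have "\<dots> = \<beta> (H S R) \<otimes>\<^bsub>E\<^esub> (lift (S \<otimes>\<^bsub>Q\<^esub> R) \<otimes>\<^bsub>E\<^esub> lift T) \<otimes>\<^bsub>E\<^esub> j (factor_set S R)"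
    using S R T SR by (simp add: E.m_comm_right_central j_central E.m_assoc)
  also have "\<dots> = \<beta> (H S R \<otimes>\<^bsub>B\<^esub> H (S \<otimes>\<^bsub>Q\<^esub> R) T) \<otimes>\<^bsub>E\<^esub> lift (S \<otimes>\<^bsub>Q\<^esub> R \<otimes>\<^bsub>Q\<^esub> T)
      \<otimes>\<^bsub>E\<^esub> j (factor_set S R \<otimes>\<^bsub>A\<^esub> factor_set (S \<otimes>\<^bsub>Q\<^esub> R) T)"
    using S R T SR by (simp add: lift_mult A.m_comm[of "factor_set S R"] E.m_assoc)
  finally show ?thesis .
qed

lemma lift_triple_right:
  assumes S: "S \<in> carrier Q" and R: "R \<in> carrier Q" and T: "T \<in> carrier Q"
  shows "lift S \<otimes>\<^bsub>E\<^esub> (lift R \<otimes>\<^bsub>E\<^esub> lift T)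
    = \<beta> (\<theta> (xs S) (H R T) \<otimes>\<^bsub>B\<^esub> H S (R \<otimes>\<^bsub>Q\<^esub> T)) \<otimes>\<^bsub>E\<^esub> lift (S \<otimes>\<^bsub>Q\<^esub> R \<otimes>\<^bsub>Q\<^esub> T)
      \<otimes>\<^bsub>E\<^esub> j (factor_set R T \<otimes>\<^bsub>A\<^esub> factor_set S (R \<otimes>\<^bsub>Q\<^esub> T))"
proof -
  have RT: "R \<otimes>\<^bsub>Q\<^esub> T \<in> carrier Q" using R T by simp
  have "lift S \<otimes>\<^bsub>E\<^esub> (lift R \<otimes>\<^bsub>E\<^esub> lift T)
      = lift S \<otimes>\<^bsub>E\<^esub> \<beta> (H R T) \<otimes>\<^bsub>E\<^esub> lift (R \<otimes>\<^bsub>Q\<^esub> T) \<otimes>\<^bsub>E\<^esub> j (factor_set R T)"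
    using S R T RT by (simp add: lift_mult E.m_assoc)
  also have "\<dots> = \<beta> (\<theta> (xs S) (H R T)) \<otimes>\<^bsub>E\<^esub> (lift S \<otimes>\<^bsub>E\<^esub> lift (R \<otimes>\<^bsub>Q\<^esub> T)) \<otimes>\<^bsub>E\<^esub> j (factor_set R T)"
    using S R T RT by (simp add: lift_mult_\<beta> E.m_assoc)
  also have "\<dots> = \<beta> (\<theta> (xs S) (H R T) \<otimes>\<^bsub>B\<^esub> H S (R \<otimes>\<^bsub>Q\<^esub> T)) \<otimes>\<^bsub>E\<^esub> lift (S \<otimes>\<^bsub>Q\<^esub> R \<otimes>\<^bsub>Q\<^esub> T)
      \<otimes>\<^bsub>E\<^esub> j (factor_set R T \<otimes>\<^bsub>A\<^esub> factor_set S (R \<otimes>\<^bsub>Q\<^esub> T))"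
    using S R T RT by (simp add: lift_mult Q.m_assoc A.m_comm[of "factor_set R T"] E.m_assoc)
  finally show ?thesis .
qed

lemma \<beta>_obs_k:
  assumes S: "S \<in> carrier Q" and R: "R \<in> carrier Q" and T: "T \<in> carrier Q"
  shows "\<beta> (k S R T) = j (factor_set R T \<otimes>\<^bsub>A\<^esub> factor_set S (R \<otimes>\<^bsub>Q\<^esub> T)
                       \<otimes>\<^bsub>A\<^esub> inv\<^bsub>A\<^esub> (factor_set S R \<otimes>\<^bsub>A\<^esub> factor_set (S \<otimes>\<^bsub>Q\<^esub> R) T))"
proof -
  define h where "h = \<theta> (xs S) (H R T) \<otimes>\<^bsub>B\<^esub> H S (R \<otimes>\<^bsub>Q\<^esub> T)"
  define h' where "h' = H S R \<otimes>\<^bsub>B\<^esub> H (S \<otimes>\<^bsub>Q\<^esub> R) T"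
  define a where "a = factor_set R T \<otimes>\<^bsub>A\<^esub> factor_set S (R \<otimes>\<^bsub>Q\<^esub> T)"
  define a' where "a' = factor_set S R \<otimes>\<^bsub>A\<^esub> factor_set (S \<otimes>\<^bsub>Q\<^esub> R) T"
  define w where "w = lift (S \<otimes>\<^bsub>Q\<^esub> R \<otimes>\<^bsub>Q\<^esub> T)"
  have closed: "h \<in> carrier B" "h' \<in> carrier B" "a \<in> carrier A" "a' \<in> carrier A" "w \<in> carrier E"
    using S R T by (simp_all add: h_def h'_def a_def a'_def w_def)
  have "\<beta> h' \<otimes>\<^bsub>E\<^esub> w \<otimes>\<^bsub>E\<^esub> j a' = \<beta> h \<otimes>\<^bsub>E\<^esub> w \<otimes>\<^bsub>E\<^esub> j a"
    using lift_triple_left[OF S R T] lift_triple_right[OF S R T] S R T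
    by (simp add: h_def h'_def a_def a'_def w_def E.m_assoc)
  then have "\<beta> h' \<otimes>\<^bsub>E\<^esub> j a' \<otimes>\<^bsub>E\<^esub> w = \<beta> h \<otimes>\<^bsub>E\<^esub> j a \<otimes>\<^bsub>E\<^esub> w"
    using closed by (simp add: E.m_comm_right_central j_central)
  then have "\<beta> h' \<otimes>\<^bsub>E\<^esub> j a' = \<beta> h \<otimes>\<^bsub>E\<^esub> j a"
    using closed by simp
  then have "inv\<^bsub>E\<^esub> (\<beta> h) \<otimes>\<^bsub>E\<^esub> \<beta> h' = j a \<otimes>\<^bsub>E\<^esub> inv\<^bsub>E\<^esub> (j a')"
    using closed by (metis E.inv_closed E.inv_solve_left E.inv_solve_right E.m_assoc E.m_closed
        \<beta>.hom_closed j.hom_closed)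
  moreover have "k S R T = inv\<^bsub>B\<^esub> h \<otimes>\<^bsub>B\<^esub> h'"
    using S R T by (simp add: obs_k_def Let_def h_def h'_def B.inv_mult_group B.m_assoc)
  ultimately show ?thesis
    using closed by (simp add: a_def [symmetric] a'_def [symmetric])
qed

theorem obs_vanishes: "obs_vanishes B D d \<theta> A \<zeta> xs bx"
  unfolding obs_vanishes_def coboundary3_def
proof (intro exI[of _ factor_set] conjI ballI)
  fix S R T assume S: "S \<in> carrier Q" and R: "R \<in> carrier Q" and T: "T \<in> carrier Q"
  have "j (\<zeta> (k S R T)) = j (factor_set R T \<otimes>\<^bsub>A\<^esub> factor_set S (R \<otimes>\<^bsub>Q\<^esub> T)
      \<otimes>\<^bsub>A\<^esub> inv\<^bsub>A\<^esub> (factor_set S R \<otimes>\<^bsub>A\<^esub> factor_set (S \<otimes>\<^bsub>Q\<^esub> R) T))"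
    using S R T by (simp add: j_\<zeta> obs_k_kernel \<beta>_obs_k)
  then have "\<zeta> (k S R T) = factor_set R T \<otimes>\<^bsub>A\<^esub> factor_set S (R \<otimes>\<^bsub>Q\<^esub> T)
      \<otimes>\<^bsub>A\<^esub> inv\<^bsub>A\<^esub> (factor_set S R \<otimes>\<^bsub>A\<^esub> factor_set (S \<otimes>\<^bsub>Q\<^esub> R) T)"
    using S R T j_inj by (simp add: inj_on_def \<zeta>_closed obs_k_kernel)
  then show "\<zeta> (k S R T) = factor_set R T \<otimes>\<^bsub>A\<^esub> inv\<^bsub>A\<^esub> (factor_set (S \<otimes>\<^bsub>Q\<^esub> R) T)
      \<otimes>\<^bsub>A\<^esub> factor_set S (R \<otimes>\<^bsub>Q\<^esub> T) \<otimes>\<^bsub>A\<^esub> inv\<^bsub>A\<^esub> (factor_set S R)"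
    using S R T by (simp add: A.inv_mult A.m_ac)
qed simp

end

section \<open>A trivialized obstruction yields an extension\<close>

locale obstruction_trivialization = obstruction_data B D d \<theta> A \<zeta> xs bx
  for B :: "'b monoid" and D :: "'d monoid" and d :: "'b \<Rightarrow> 'd"
    and \<theta> :: "'d \<Rightarrow> 'b \<Rightarrow> 'b" and A :: "'a monoid" and \<zeta> :: "'b \<Rightarrow> 'a"
    and xs :: "'d set \<Rightarrow> 'd" and bx :: "'d \<Rightarrow> 'b" +
  fixes g :: "'d set \<Rightarrow> 'd set \<Rightarrow> 'a"
  assumes g_closed [simp]:
      "\<And>S T. S \<in> carrier (Coker B D d) \<Longrightarrow> T \<in> carrier (Coker B D d) \<Longrightarrow> g S T \<in> carrier A"
    and g_one_left [simp]: "\<And>T. T \<in> carrier (Coker B D d) \<Longrightarrow> g \<one>\<^bsub>Coker B D d\<^esub> T = \<one>\<^bsub>A\<^esub>"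
    and g_one_right [simp]: "\<And>T. T \<in> carrier (Coker B D d) \<Longrightarrow> g T \<one>\<^bsub>Coker B D d\<^esub> = \<one>\<^bsub>A\<^esub>"
    and g_trivializes: "\<And>S R T. S \<in> carrier (Coker B D d) \<Longrightarrow> R \<in> carrier (Coker B D d) \<Longrightarrow>
      T \<in> carrier (Coker B D d) \<Longrightarrow>
      \<zeta> (obs_k B D d \<theta> xs bx S R T) \<otimes>\<^bsub>A\<^esub> g (S \<otimes>\<^bsub>Coker B D d\<^esub> R) T \<otimes>\<^bsub>A\<^esub> g S R
        = g R T \<otimes>\<^bsub>A\<^esub> g S (R \<otimes>\<^bsub>Coker B D d\<^esub> T)"
begin

definition prod_coeff :: "'d \<Rightarrow> 'd \<Rightarrow> 'b" where
  "prod_coeff x y = coeff x \<otimes>\<^bsub>B\<^esub> \<theta> (xs (cls x)) (coeff y) \<otimes>\<^bsub>B\<^esub> H (cls x) (cls y)"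

definition coeff_defect :: "'d \<Rightarrow> 'd \<Rightarrow> 'b" where
  "coeff_defect x y = inv\<^bsub>B\<^esub> (coeff (x \<otimes>\<^bsub>D\<^esub> y)) \<otimes>\<^bsub>B\<^esub> prod_coeff x y"

definition ext_cocycle :: "'d \<Rightarrow> 'd \<Rightarrow> 'a" where
  "ext_cocycle x y = \<zeta> (coeff_defect x y) \<otimes>\<^bsub>A\<^esub> g (cls x) (cls y)"

lemma prod_coeff_closed [simp]: "x \<in> carrier D \<Longrightarrow> y \<in> carrier D \<Longrightarrow> prod_coeff x y \<in> carrier B"
  by (simp add: prod_coeff_def)

lemma coeff_mult_defect: "x \<in> carrier D \<Longrightarrow> y \<in> carrier D \<Longrightarrow>
    coeff (x \<otimes>\<^bsub>D\<^esub> y) \<otimes>\<^bsub>B\<^esub> coeff_defect x y = prod_coeff x y"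
  by (simp add: coeff_defect_def)

lemma coeff_defect_kernel: "x \<in> carrier D \<Longrightarrow> y \<in> carrier D \<Longrightarrow> coeff_defect x y \<in> K"
  unfolding kernel_iff
  by (simp add: coeff_defect_def prod_coeff_def d_coeff d_\<theta> d_Htil cls_mult D.inv_mult_group D.m_assoc)

lemma coeff_defect_closed [simp]: "x \<in> carrier D \<Longrightarrow> y \<in> carrier D \<Longrightarrow> coeff_defect x y \<in> carrier B"
  using coeff_defect_kernel by (simp add: kernel_iff)

lemma ext_cocycle_closed [simp]: "x \<in> carrier D \<Longrightarrow> y \<in> carrier D \<Longrightarrow> ext_cocycle x y \<in> carrier A"
  by (simp add: ext_cocycle_def \<zeta>_closed coeff_defect_kernel)

lemma ext_cocycle_one_left: "y \<in> carrier D \<Longrightarrow> ext_cocycle \<one>\<^bsub>D\<^esub> y = \<one>\<^bsub>A\<^esub>"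
  and ext_cocycle_one_right: "x \<in> carrier D \<Longrightarrow> ext_cocycle x \<one>\<^bsub>D\<^esub> = \<one>\<^bsub>A\<^esub>"
  by (simp_all add: ext_cocycle_def coeff_defect_def prod_coeff_def \<theta>_one_left \<zeta>_one)

lemma coeff_defect_product_left:
  assumes x: "x \<in> carrier D" and y: "y \<in> carrier D" and z: "z \<in> carrier D"
  shows "coeff (x \<otimes>\<^bsub>D\<^esub> y \<otimes>\<^bsub>D\<^esub> z) \<otimes>\<^bsub>B\<^esub> (coeff_defect x y \<otimes>\<^bsub>B\<^esub> coeff_defect (x \<otimes>\<^bsub>D\<^esub> y) z)
    = prod_coeff x y \<otimes>\<^bsub>B\<^esub>
      (\<theta> (xs (cls x \<otimes>\<^bsub>Q\<^esub> cls y)) (coeff z) \<otimes>\<^bsub>B\<^esub> H (cls x \<otimes>\<^bsub>Q\<^esub> cls y) (cls z))"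
    (is "?c \<otimes>\<^bsub>B\<^esub> (?k1 \<otimes>\<^bsub>B\<^esub> ?k2) = _ \<otimes>\<^bsub>B\<^esub> ?rest")
proof -
  have kernel: "?k1 \<in> K" "?k2 \<in> K"
    using x y z by (simp_all add: coeff_defect_kernel)
  have closed: "?k1 \<in> carrier B" "?k2 \<in> carrier B" "?rest \<in> carrier B" "?c \<in> carrier B"
    using x y z by simp_all
  have "?c \<otimes>\<^bsub>B\<^esub> (?k1 \<otimes>\<^bsub>B\<^esub> ?k2) = ?c \<otimes>\<^bsub>B\<^esub> ?k2 \<otimes>\<^bsub>B\<^esub> ?k1"
    using kernel_central[OF kernel(1) closed(2)] closed by (simp add: B.m_assoc)
  also have "\<dots> = coeff (x \<otimes>\<^bsub>D\<^esub> y) \<otimes>\<^bsub>B\<^esub> ?rest \<otimes>\<^bsub>B\<^esub> ?k1"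
    using x y z by (simp add: coeff_mult_defect prod_coeff_def cls_mult B.m_assoc)
  also have "\<dots> = prod_coeff x y \<otimes>\<^bsub>B\<^esub> ?rest"
    using x y closed kernel_central[OF kernel(1) closed(3)]
    by (simp add: coeff_mult_defect [symmetric] B.m_assoc)
  finally show ?thesis .
qed

lemma coeff_defect_product_right:
  assumes x: "x \<in> carrier D" and y: "y \<in> carrier D" and z: "z \<in> carrier D"
  shows "coeff (x \<otimes>\<^bsub>D\<^esub> y \<otimes>\<^bsub>D\<^esub> z) \<otimes>\<^bsub>B\<^esub>
      (coeff_defect x (y \<otimes>\<^bsub>D\<^esub> z) \<otimes>\<^bsub>B\<^esub> (\<theta> (xs (cls x)) (coeff_defect y z) \<otimes>\<^bsub>B\<^esub> k (cls x) (cls y) (cls z)))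
    = prod_coeff x y \<otimes>\<^bsub>B\<^esub>
      (\<theta> (xs (cls x \<otimes>\<^bsub>Q\<^esub> cls y)) (coeff z) \<otimes>\<^bsub>B\<^esub> H (cls x \<otimes>\<^bsub>Q\<^esub> cls y) (cls z))"
proof -
  define S T U where "S = cls x" and "T = cls y" and "U = cls z"
  have Q: "S \<in> carrier Q" "T \<in> carrier Q" "U \<in> carrier Q" using x y z by (simp_all add: S_def T_def U_def)
  define k3 where "k3 = \<theta> (xs S) (coeff_defect y z)"
  have kernel: "k3 \<in> K" "k S T U \<in> K"
    using y z Q by (simp_all add: k3_def coeff_defect_kernel kernel_\<theta>_closed obs_k_kernel)
  then have closed: "k3 \<in> carrier B" "k S T U \<in> carrier B"
    by (simp_all add: kernel_iff)
  have "coeff (x \<otimes>\<^bsub>D\<^esub> y \<otimes>\<^bsub>D\<^esub> z) \<otimes>\<^bsub>B\<^esub> coeff_defect x (y \<otimes>\<^bsub>D\<^esub> z)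
      = coeff x \<otimes>\<^bsub>B\<^esub> \<theta> (xs S) (coeff (y \<otimes>\<^bsub>D\<^esub> z)) \<otimes>\<^bsub>B\<^esub> H S (T \<otimes>\<^bsub>Q\<^esub> U)"
    using x y z coeff_mult_defect[of x "y \<otimes>\<^bsub>D\<^esub> z"]
    by (simp add: prod_coeff_def S_def T_def U_def cls_mult D.m_assoc)
  then have "coeff (x \<otimes>\<^bsub>D\<^esub> y \<otimes>\<^bsub>D\<^esub> z) \<otimes>\<^bsub>B\<^esub> (coeff_defect x (y \<otimes>\<^bsub>D\<^esub> z) \<otimes>\<^bsub>B\<^esub> (k3 \<otimes>\<^bsub>B\<^esub> k S T U))
      = coeff x \<otimes>\<^bsub>B\<^esub> \<theta> (xs S) (coeff (y \<otimes>\<^bsub>D\<^esub> z)) \<otimes>\<^bsub>B\<^esub> H S (T \<otimes>\<^bsub>Q\<^esub> U) \<otimes>\<^bsub>B\<^esub> k3 \<otimes>\<^bsub>B\<^esub> k S T U"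
    using x y z closed by (simp add: B.m_assoc [symmetric])
  also have "\<dots> = coeff x \<otimes>\<^bsub>B\<^esub> \<theta> (xs S) (coeff (y \<otimes>\<^bsub>D\<^esub> z) \<otimes>\<^bsub>B\<^esub> coeff_defect y z)
      \<otimes>\<^bsub>B\<^esub> H S (T \<otimes>\<^bsub>Q\<^esub> U) \<otimes>\<^bsub>B\<^esub> k S T U"
    using x y z Q closed kernel_central[OF kernel(1), of "H S (T \<otimes>\<^bsub>Q\<^esub> U)"]
    by (simp add: k3_def B.m_assoc)
  also have "\<dots> = coeff x \<otimes>\<^bsub>B\<^esub> \<theta> (xs S) (coeff y) \<otimes>\<^bsub>B\<^esub> \<theta> (xs S) (\<theta> (xs T) (coeff z))
      \<otimes>\<^bsub>B\<^esub> (\<theta> (xs S) (H T U) \<otimes>\<^bsub>B\<^esub> H S (T \<otimes>\<^bsub>Q\<^esub> U) \<otimes>\<^bsub>B\<^esub> k S T U)"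
    using x y z Q closed by (simp add: coeff_mult_defect prod_coeff_def T_def U_def B.m_assoc)
  also have "\<dots> = coeff x \<otimes>\<^bsub>B\<^esub> \<theta> (xs S) (coeff y) \<otimes>\<^bsub>B\<^esub> (\<theta> (xs S) (\<theta> (xs T) (coeff z))
      \<otimes>\<^bsub>B\<^esub> H S T) \<otimes>\<^bsub>B\<^esub> H (S \<otimes>\<^bsub>Q\<^esub> T) U"
    using x y z Q by (simp add: obs_k_defining_eq B.m_assoc)
  also have "\<dots> = prod_coeff x y \<otimes>\<^bsub>B\<^esub>
      (\<theta> (xs (S \<otimes>\<^bsub>Q\<^esub> T)) (coeff z) \<otimes>\<^bsub>B\<^esub> H (S \<otimes>\<^bsub>Q\<^esub> T) U)"
    using x y z Q by (simp add: \<theta>_xs_mult prod_coeff_def S_def T_def B.m_assoc)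
  finally show ?thesis
    by (simp add: k3_def S_def T_def U_def)
qed

lemma coeff_defect_cocycle:
  assumes x: "x \<in> carrier D" and y: "y \<in> carrier D" and z: "z \<in> carrier D"
  shows "coeff_defect x y \<otimes>\<^bsub>B\<^esub> coeff_defect (x \<otimes>\<^bsub>D\<^esub> y) z
    = coeff_defect x (y \<otimes>\<^bsub>D\<^esub> z) \<otimes>\<^bsub>B\<^esub> (\<theta> (xs (cls x)) (coeff_defect y z) \<otimes>\<^bsub>B\<^esub> k (cls x) (cls y) (cls z))"
proof -
  have "k (cls x) (cls y) (cls z) \<in> K"
    using x y z by (simp add: obs_k_kernel)
  moreover have "coeff (x \<otimes>\<^bsub>D\<^esub> y \<otimes>\<^bsub>D\<^esub> z) \<otimes>\<^bsub>B\<^esub> (coeff_defect x y \<otimes>\<^bsub>B\<^esub> coeff_defect (x \<otimes>\<^bsub>D\<^esub> y) z)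
    = coeff (x \<otimes>\<^bsub>D\<^esub> y \<otimes>\<^bsub>D\<^esub> z) \<otimes>\<^bsub>B\<^esub> (coeff_defect x (y \<otimes>\<^bsub>D\<^esub> z)
      \<otimes>\<^bsub>B\<^esub> (\<theta> (xs (cls x)) (coeff_defect y z) \<otimes>\<^bsub>B\<^esub> k (cls x) (cls y) (cls z)))"
    using coeff_defect_product_left[OF x y z] coeff_defect_product_right[OF x y z] by simp
  ultimately show ?thesis
    using x y z by (simp add: kernel_iff B.Units_eq)
qed

lemma ext_cocycle_identity:
  assumes x: "x \<in> carrier D" and y: "y \<in> carrier D" and z: "z \<in> carrier D"
  shows "ext_cocycle x y \<otimes>\<^bsub>A\<^esub> ext_cocycle (x \<otimes>\<^bsub>D\<^esub> y) z
    = ext_cocycle y z \<otimes>\<^bsub>A\<^esub> ext_cocycle x (y \<otimes>\<^bsub>D\<^esub> z)"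
proof -
  define S T U where "S = cls x" and "T = cls y" and "U = cls z"
  have Q: "S \<in> carrier Q" "T \<in> carrier Q" "U \<in> carrier Q" using x y z by (simp_all add: S_def T_def U_def)
  define z1 z2 z3 z4 where "z1 = \<zeta> (coeff_defect x y)" and "z2 = \<zeta> (coeff_defect (x \<otimes>\<^bsub>D\<^esub> y) z)"
    and "z3 = \<zeta> (coeff_defect y z)" and "z4 = \<zeta> (coeff_defect x (y \<otimes>\<^bsub>D\<^esub> z))"
  have closed: "z1 \<in> carrier A" "z2 \<in> carrier A" "z3 \<in> carrier A" "z4 \<in> carrier A"
    "\<zeta> (k S T U) \<in> carrier A"
    using x y z Q by (simp_all add: z1_def z2_def z3_def z4_def \<zeta>_closed coeff_defect_kernel obs_k_kernel)
  have kernel: "coeff_defect x y \<in> K" "coeff_defect (x \<otimes>\<^bsub>D\<^esub> y) z \<in> K"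
    "\<theta> (xs S) (coeff_defect y z) \<in> K" "coeff_defect x (y \<otimes>\<^bsub>D\<^esub> z) \<in> K" "k S T U \<in> K"
    using x y z Q by (simp_all add: coeff_defect_kernel kernel_\<theta>_closed obs_k_kernel)
  have "z1 \<otimes>\<^bsub>A\<^esub> z2 = \<zeta> (coeff_defect x y \<otimes>\<^bsub>B\<^esub> coeff_defect (x \<otimes>\<^bsub>D\<^esub> y) z)"
    using kernel by (simp add: z1_def z2_def \<zeta>_mult)
  also have "\<dots> = \<zeta> (coeff_defect x (y \<otimes>\<^bsub>D\<^esub> z) \<otimes>\<^bsub>B\<^esub> (\<theta> (xs S) (coeff_defect y z) \<otimes>\<^bsub>B\<^esub> k S T U))"
    using coeff_defect_cocycle[OF x y z] by (simp add: S_def T_def U_def)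
  also have "\<dots> = z4 \<otimes>\<^bsub>A\<^esub> (z3 \<otimes>\<^bsub>A\<^esub> \<zeta> (k S T U))"
    using kernel \<zeta>_\<theta>[OF xs_closed[OF Q(1)] coeff_defect_kernel[OF y z]]
    by (simp add: z3_def z4_def \<zeta>_mult kernel_iff)
  finally have cocycle_z: "z1 \<otimes>\<^bsub>A\<^esub> z2 = z4 \<otimes>\<^bsub>A\<^esub> (z3 \<otimes>\<^bsub>A\<^esub> \<zeta> (k S T U))" .
  have "ext_cocycle x y \<otimes>\<^bsub>A\<^esub> ext_cocycle (x \<otimes>\<^bsub>D\<^esub> y) z
      = (z1 \<otimes>\<^bsub>A\<^esub> z2) \<otimes>\<^bsub>A\<^esub> (g (S \<otimes>\<^bsub>Q\<^esub> T) U \<otimes>\<^bsub>A\<^esub> g S T)"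
    using x y z Q closed
    by (simp add: ext_cocycle_def z1_def [symmetric] z2_def [symmetric] S_def T_def U_def cls_mult A.m_ac)
  also have "\<dots> = z4 \<otimes>\<^bsub>A\<^esub> z3 \<otimes>\<^bsub>A\<^esub> (\<zeta> (k S T U) \<otimes>\<^bsub>A\<^esub> g (S \<otimes>\<^bsub>Q\<^esub> T) U \<otimes>\<^bsub>A\<^esub> g S T)"
    using Q closed by (simp only: cocycle_z) (simp add: A.m_ac)
  also have "\<dots> = ext_cocycle y z \<otimes>\<^bsub>A\<^esub> ext_cocycle x (y \<otimes>\<^bsub>D\<^esub> z)"
    using x y z Q closed
    by (simp only: g_trivializes) (simp add: ext_cocycle_def z3_def [symmetric] z4_def [symmetric] S_def T_def U_def
        cls_mult A.m_ac)
  finally show ?thesis .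
qed

lemma normalized_2cocycle_ext_cocycle: "normalized_2cocycle D A ext_cocycle"
  unfolding normalized_2cocycle_def
  by (simp add: ext_cocycle_one_left ext_cocycle_one_right ext_cocycle_identity)

abbreviation E where "E \<equiv> twisted_product A D ext_cocycle"

sublocale E: group E
  using group_twisted_product[OF comm_group_A group_D normalized_2cocycle_ext_cocycle] .

definition ext_\<beta> :: "'b \<Rightarrow> 'a \<times> 'd" where
  "ext_\<beta> b = (\<zeta> (inv\<^bsub>B\<^esub> (coeff (d b)) \<otimes>\<^bsub>B\<^esub> b), d b)"

lemma ext_\<beta>_closed: "b \<in> carrier B \<Longrightarrow> ext_\<beta> b \<in> carrier E"
  by (simp add: ext_\<beta>_def \<zeta>_closed coeff_d_kernel)

lemma ext_\<beta>_mult: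
  assumes b: "b \<in> carrier B" and b': "b' \<in> carrier B"
  shows "ext_\<beta> (b \<otimes>\<^bsub>B\<^esub> b') = ext_\<beta> b \<otimes>\<^bsub>E\<^esub> ext_\<beta> b'"
proof -
  define c c' c'' where "c = coeff (d b)" and "c' = coeff (d b')" and "c'' = coeff (d b \<otimes>\<^bsub>D\<^esub> d b')"
  define k1 k2 k3 where "k1 = inv\<^bsub>B\<^esub> c \<otimes>\<^bsub>B\<^esub> b" and "k2 = inv\<^bsub>B\<^esub> c' \<otimes>\<^bsub>B\<^esub> b'"
    and "k3 = inv\<^bsub>B\<^esub> c'' \<otimes>\<^bsub>B\<^esub> (c \<otimes>\<^bsub>B\<^esub> c')"
  have coeffs: "c \<in> carrier B" "c' \<in> carrier B" "c'' \<in> carrier B"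
    using b b' by (simp_all add: c_def c'_def c''_def)
  have k3_eq: "k3 = coeff_defect (d b) (d b')"
    using b b' by (simp add: k3_def c_def c'_def c''_def coeff_defect_def prod_coeff_def \<theta>_one_left)
  have kernel: "k1 \<in> K" "k2 \<in> K" "k3 \<in> K"
    using b b' by (simp_all add: k1_def k2_def c_def c'_def coeff_d_kernel k3_eq coeff_defect_kernel)
  then have closed: "k1 \<in> carrier B" "k2 \<in> carrier B" "k3 \<in> carrier B"
    by (simp_all add: kernel_iff)
  have "c'' \<otimes>\<^bsub>B\<^esub> (k1 \<otimes>\<^bsub>B\<^esub> k2 \<otimes>\<^bsub>B\<^esub> k3) = c'' \<otimes>\<^bsub>B\<^esub> (k3 \<otimes>\<^bsub>B\<^esub> (k1 \<otimes>\<^bsub>B\<^esub> k2))"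
    using closed kernel_central[OF kernel(3), of "k1 \<otimes>\<^bsub>B\<^esub> k2"] by simp
  also have "\<dots> = c \<otimes>\<^bsub>B\<^esub> (c' \<otimes>\<^bsub>B\<^esub> (k1 \<otimes>\<^bsub>B\<^esub> k2))"
    using coeffs closed by (simp add: k3_def B.m_assoc)
  also have "\<dots> = c \<otimes>\<^bsub>B\<^esub> (k1 \<otimes>\<^bsub>B\<^esub> (c' \<otimes>\<^bsub>B\<^esub> k2))"
    using coeffs closed kernel_central[OF kernel(1) coeffs(2)] by (simp add: B.m_assoc [symmetric])
  also have "\<dots> = c'' \<otimes>\<^bsub>B\<^esub> (inv\<^bsub>B\<^esub> c'' \<otimes>\<^bsub>B\<^esub> (b \<otimes>\<^bsub>B\<^esub> b'))"
    using coeffs b b' by (simp add: k1_def k2_def B.m_assoc)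
  finally have "k1 \<otimes>\<^bsub>B\<^esub> k2 \<otimes>\<^bsub>B\<^esub> k3 = inv\<^bsub>B\<^esub> c'' \<otimes>\<^bsub>B\<^esub> (b \<otimes>\<^bsub>B\<^esub> b')"
    using coeffs closed b b' by (metis B.Units_eq B.Units_l_cancel B.inv_closed B.m_closed)
  then have "\<zeta> (inv\<^bsub>B\<^esub> c'' \<otimes>\<^bsub>B\<^esub> (b \<otimes>\<^bsub>B\<^esub> b')) = \<zeta> (k1 \<otimes>\<^bsub>B\<^esub> k2 \<otimes>\<^bsub>B\<^esub> k3)"
    by simp
  also have "\<dots> = \<zeta> k1 \<otimes>\<^bsub>A\<^esub> \<zeta> k2 \<otimes>\<^bsub>A\<^esub> \<zeta> k3"
    using kernel by (simp add: \<zeta>_mult kernel_iff)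
  finally show ?thesis
    using b b' \<zeta>_closed[OF kernel(3)] by (simp add: ext_\<beta>_def ext_cocycle_def k3_eq [symmetric] k1_def k2_def c_def c'_def c''_def)
qed

lemma coeff_defect_conj:
  assumes x: "x \<in> carrier D" and b: "b \<in> carrier B"
  shows "\<theta> (xs (cls x)) (inv\<^bsub>B\<^esub> (coeff (d b)) \<otimes>\<^bsub>B\<^esub> b) \<otimes>\<^bsub>B\<^esub> coeff_defect x (d b)
    = inv\<^bsub>B\<^esub> (coeff (d (\<theta> x b))) \<otimes>\<^bsub>B\<^esub> \<theta> x b \<otimes>\<^bsub>B\<^esub> coeff_defect (d (\<theta> x b)) x"
proof -
  define S where "S = cls x"
  define y where "y = d (\<theta> x b)"
  have y: "y \<in> carrier D" using x b by (simp add: y_def)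
  have yx: "y \<otimes>\<^bsub>D\<^esub> x = x \<otimes>\<^bsub>D\<^esub> d b" using x b by (simp add: y_def d_\<theta> D.m_assoc)
  define k1 k2 k3 k4 where "k1 = \<theta> (xs S) (inv\<^bsub>B\<^esub> (coeff (d b)) \<otimes>\<^bsub>B\<^esub> b)"
    and "k2 = coeff_defect x (d b)" and "k3 = inv\<^bsub>B\<^esub> (coeff y) \<otimes>\<^bsub>B\<^esub> \<theta> x b"
    and "k4 = coeff_defect y x"
  define c where "c = coeff (x \<otimes>\<^bsub>D\<^esub> d b)"
  have kernel: "k1 \<in> K" "k2 \<in> K" "k3 \<in> K" "k4 \<in> K"
    using x b y kernel_\<theta>_closed[OF xs_closed[OF cls_closed[OF x]] coeff_d_kernel[OF b]]
    by (simp_all add: k1_def k2_def k3_def k4_def S_def y_def coeff_d_kernel coeff_defect_kernel)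
  then have closed: "k1 \<in> carrier B" "k2 \<in> carrier B" "k3 \<in> carrier B" "k4 \<in> carrier B"
    by (simp_all add: kernel_iff)
  have c: "c \<in> carrier B" using x b by (simp add: c_def)
  have "c \<otimes>\<^bsub>B\<^esub> (k1 \<otimes>\<^bsub>B\<^esub> k2) = c \<otimes>\<^bsub>B\<^esub> k2 \<otimes>\<^bsub>B\<^esub> k1"
    using c closed kernel_central[OF kernel(1) closed(2)] by (simp add: B.m_assoc)
  also have "\<dots> = coeff x \<otimes>\<^bsub>B\<^esub> \<theta> (xs S) b"
    using x b by (simp add: c_def k1_def k2_def coeff_mult_defect prod_coeff_def S_def B.m_assoc)
  finally have left: "c \<otimes>\<^bsub>B\<^esub> (k1 \<otimes>\<^bsub>B\<^esub> k2) = coeff x \<otimes>\<^bsub>B\<^esub> \<theta> (xs S) b" .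
  have "c \<otimes>\<^bsub>B\<^esub> (k3 \<otimes>\<^bsub>B\<^esub> k4) = c \<otimes>\<^bsub>B\<^esub> k4 \<otimes>\<^bsub>B\<^esub> k3"
    using c closed kernel_central[OF kernel(3) closed(4)] by (simp add: B.m_assoc)
  also have "\<dots> = coeff y \<otimes>\<^bsub>B\<^esub> coeff x \<otimes>\<^bsub>B\<^esub> k3"
  proof -
    have "cls y = \<one>\<^bsub>Q\<^esub>" using x b by (simp add: y_def)
    then have "c \<otimes>\<^bsub>B\<^esub> k4 = coeff y \<otimes>\<^bsub>B\<^esub> coeff x"
      using x y coeff_mult_defect[OF y x] by (simp add: c_def k4_def yx prod_coeff_def \<theta>_one_left)
    then show ?thesis by simp
  qed
  also have "\<dots> = coeff y \<otimes>\<^bsub>B\<^esub> (k3 \<otimes>\<^bsub>B\<^esub> coeff x)"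
    using x y closed kernel_central[OF kernel(3), of "coeff x"] by (simp add: B.m_assoc)
  also have "\<dots> = \<theta> x b \<otimes>\<^bsub>B\<^esub> coeff x"
    using x b y by (simp add: k3_def B.m_assoc)
  also have "\<dots> = coeff x \<otimes>\<^bsub>B\<^esub> \<theta> (xs S) b"
    using x b \<theta>_coeff[OF x b] by (simp add: S_def B.m_assoc)
  finally have right: "c \<otimes>\<^bsub>B\<^esub> (k3 \<otimes>\<^bsub>B\<^esub> k4) = coeff x \<otimes>\<^bsub>B\<^esub> \<theta> (xs S) b" .
  have "k1 \<otimes>\<^bsub>B\<^esub> k2 = k3 \<otimes>\<^bsub>B\<^esub> k4"
    using left right c closed by (metis B.Units_eq B.Units_l_cancel B.m_closed)
  then show ?thesis
    using x b by (simp add: k1_def k2_def k3_def k4_def S_def y_def B.m_assoc)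
qed

lemma ext_\<beta>_conj:
  assumes a: "a \<in> carrier A" and x: "x \<in> carrier D" and b: "b \<in> carrier B"
  shows "ext_\<beta> (\<theta> x b) \<otimes>\<^bsub>E\<^esub> (a, x) = (a, x) \<otimes>\<^bsub>E\<^esub> ext_\<beta> b"
proof -
  define y where "y = d (\<theta> x b)"
  have yx: "y \<otimes>\<^bsub>D\<^esub> x = x \<otimes>\<^bsub>D\<^esub> d b" using x b by (simp add: y_def d_\<theta> D.m_assoc)
  have cls_y: "cls y = \<one>\<^bsub>Q\<^esub>" using x b by (simp add: y_def)
  have kernel: "inv\<^bsub>B\<^esub> (coeff (d b)) \<otimes>\<^bsub>B\<^esub> b \<in> K" "coeff_defect x (d b) \<in> K"
    "inv\<^bsub>B\<^esub> (coeff y) \<otimes>\<^bsub>B\<^esub> \<theta> x b \<in> K" "coeff_defect y x \<in> K"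
    using x b by (simp_all add: y_def coeff_d_kernel coeff_defect_kernel)
  have "\<zeta> (inv\<^bsub>B\<^esub> (coeff (d b)) \<otimes>\<^bsub>B\<^esub> b) \<otimes>\<^bsub>A\<^esub> \<zeta> (coeff_defect x (d b))
      = \<zeta> (inv\<^bsub>B\<^esub> (coeff y) \<otimes>\<^bsub>B\<^esub> \<theta> x b) \<otimes>\<^bsub>A\<^esub> \<zeta> (coeff_defect y x)"
  proof -
    have "\<zeta> (inv\<^bsub>B\<^esub> (coeff (d b)) \<otimes>\<^bsub>B\<^esub> b) \<otimes>\<^bsub>A\<^esub> \<zeta> (coeff_defect x (d b))
        = \<zeta> (\<theta> (xs (cls x)) (inv\<^bsub>B\<^esub> (coeff (d b)) \<otimes>\<^bsub>B\<^esub> b) \<otimes>\<^bsub>B\<^esub> coeff_defect x (d b))"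
      using kernel x by (simp add: \<zeta>_mult \<zeta>_\<theta> kernel_\<theta>_closed)
    also have "\<dots> = \<zeta> (inv\<^bsub>B\<^esub> (coeff y) \<otimes>\<^bsub>B\<^esub> \<theta> x b \<otimes>\<^bsub>B\<^esub> coeff_defect y x)"
      using coeff_defect_conj[OF x b] by (simp add: y_def)
    also have "\<dots> = \<zeta> (inv\<^bsub>B\<^esub> (coeff y) \<otimes>\<^bsub>B\<^esub> \<theta> x b) \<otimes>\<^bsub>A\<^esub> \<zeta> (coeff_defect y x)"
      using kernel by (simp add: \<zeta>_mult)
    finally show ?thesis .
  qed
  then show ?thesis
    using a x b kernel
    by (simp add: ext_\<beta>_def ext_cocycle_def y_def [symmetric] yx cls_y \<zeta>_closed A.m_ac)
qed

theorem zeta_extension: "zeta_extension B D d \<theta> A \<zeta> E (\<lambda>a. (a, \<one>\<^bsub>D\<^esub>)) snd ext_\<beta>"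
  unfolding zeta_extension_def
proof (intro conjI ballI)
  show "group E" by (rule E.is_group)
  show "(\<lambda>a. (a, \<one>\<^bsub>D\<^esub>)) \<in> hom A E"
    by (auto simp: hom_def ext_cocycle_one_left)
  show "snd \<in> hom E D" by (auto simp: hom_def)
  show "snd ` carrier E = carrier D" by force
  show "(\<lambda>a. (a, \<one>\<^bsub>D\<^esub>)) ` carrier A = kernel E D snd" by (force simp: kernel_def)
  show "ext_\<beta> \<in> hom B E" by (intro homI ext_\<beta>_closed ext_\<beta>_mult)
next
  fix a e assume "a \<in> carrier A" "e \<in> carrier E"
  then show "(a, \<one>\<^bsub>D\<^esub>) \<otimes>\<^bsub>E\<^esub> e = e \<otimes>\<^bsub>E\<^esub> (a, \<one>\<^bsub>D\<^esub>)"
    by (auto simp: ext_cocycle_one_left ext_cocycle_one_right A.m_comm)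
next
  fix e b assume "e \<in> carrier E" and b: "b \<in> carrier B"
  then obtain a x where e: "e = (a, x)" and a: "a \<in> carrier A" and x: "x \<in> carrier D" by auto
  have closed: "ext_\<beta> (\<theta> x b) \<in> carrier E" "(a, x) \<otimes>\<^bsub>E\<^esub> ext_\<beta> b \<in> carrier E" "(a, x) \<in> carrier E"
    using a x b ext_\<beta>_closed[of b] ext_\<beta>_closed[of "\<theta> x b"] by (simp_all only: E.m_closed) auto
  show "ext_\<beta> (\<theta> (snd e) b) = e \<otimes>\<^bsub>E\<^esub> ext_\<beta> b \<otimes>\<^bsub>E\<^esub> inv\<^bsub>E\<^esub> e"
    unfolding e snd_conv
    by (rule iffD2[OF E.inv_solve_right[OF closed]]) (rule ext_\<beta>_conj[OF a x b, symmetric])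
qed (auto simp: inj_on_def ext_\<beta>_def kernel_iff)

end

lemma extension_imp_obs_vanishes:
  assumes "crossed_module B D d \<theta>" "abstract_kernel B D d \<theta> A \<zeta>" "obs_choice B D d xs bx"
    and "zeta_extension B D d \<theta> A \<zeta> E j p \<beta>"
  shows "obs_vanishes B D d \<theta> A \<zeta> xs bx"
proof -
  interpret obstruction_extension B D d \<theta> A \<zeta> xs bx E j p \<beta>
    using assms by (simp add: obstruction_extension_def obstruction_extension_axioms_def
        obstruction_data_def)
  show ?thesis by (rule obs_vanishes)
qed

lemma obs_vanishes_imp_extension:
  fixes B :: "'b monoid" and D :: "'d monoid" and A :: "'a monoid"
  assumes data: "crossed_module B D d \<theta>" "abstract_kernel B D d \<theta> A \<zeta>" "obs_choice B D d xs bx"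
    and vanishes: "obs_vanishes B D d \<theta> A \<zeta> xs bx"
  shows "\<exists>(E :: ('a \<times> 'd) monoid) j p \<beta>. zeta_extension B D d \<theta> A \<zeta> E j p \<beta>"
proof -
  interpret obstruction_data B D d \<theta> A \<zeta> xs bx
    using data by (simp add: obstruction_data_def)
  have "coboundary3 Q A (\<lambda>S R T. \<zeta> (k S R T))"
    using vanishes by (simp add: obs_vanishes_def)
  moreover have "\<zeta> (k \<one>\<^bsub>Q\<^esub> \<one>\<^bsub>Q\<^esub> T) = \<one>\<^bsub>A\<^esub>" "\<zeta> (k T \<one>\<^bsub>Q\<^esub> \<one>\<^bsub>Q\<^esub>) = \<one>\<^bsub>A\<^esub>"
    if "T \<in> carrier Q" for T
    using that by (simp_all add: obs_k_one_one_left obs_k_one_one_right \<zeta>_one)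
  ultimately obtain g where g: "\<And>S T. S \<in> carrier Q \<Longrightarrow> T \<in> carrier Q \<Longrightarrow> g S T \<in> carrier A"
    "\<And>T. T \<in> carrier Q \<Longrightarrow> g \<one>\<^bsub>Q\<^esub> T = \<one>\<^bsub>A\<^esub>" "\<And>T. T \<in> carrier Q \<Longrightarrow> g T \<one>\<^bsub>Q\<^esub> = \<one>\<^bsub>A\<^esub>"
    "\<And>S R T. S \<in> carrier Q \<Longrightarrow> R \<in> carrier Q \<Longrightarrow> T \<in> carrier Q \<Longrightarrow>
      \<zeta> (k S R T) \<otimes>\<^bsub>A\<^esub> g (S \<otimes>\<^bsub>Q\<^esub> R) T \<otimes>\<^bsub>A\<^esub> g S R = g R T \<otimes>\<^bsub>A\<^esub> g S (R \<otimes>\<^bsub>Q\<^esub> T)"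
    by (rule coboundary3_normalize[OF Q.is_group comm_group_A]) blast+
  interpret obstruction_trivialization B D d \<theta> A \<zeta> xs bx g
    by unfold_locales (use g in auto)
  show ?thesis using zeta_extension by blast
qed

theorem mainTheorem4:
  fixes B :: "'b monoid" and D :: "'d monoid" and d :: "'b \<Rightarrow> 'd"
    and \<theta> :: "'d \<Rightarrow> 'b \<Rightarrow> 'b" and A :: "'a monoid" and \<zeta> :: "'b \<Rightarrow> 'a"
    and xs :: "'d set \<Rightarrow> 'd" and bx :: "'d \<Rightarrow> 'b"
  assumes "crossed_module B D d \<theta>"
    and "abstract_kernel B D d \<theta> A \<zeta>"
    and "\<zeta> ` kernel B D d = carrier A"
    and "obs_choice B D d xs bx"
  shows "((\<exists>(E :: ('a \<times> 'd) monoid) j p \<beta>. zeta_extension B D d \<theta> A \<zeta> E j p \<beta>)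
            \<longleftrightarrow> obs_vanishes B D d \<theta> A \<zeta> xs bx)
       \<and> (\<forall>(E :: 'e monoid) j p \<beta>. zeta_extension B D d \<theta> A \<zeta> E j p \<beta>
            \<longrightarrow> obs_vanishes B D d \<theta> A \<zeta> xs bx)"
  \<comment> \<open>the surjectivity of \<open>\<zeta>\<close> is needed in neither direction\<close>
proof (intro conjI iffI allI impI)
  assume "\<exists>(E :: ('a \<times> 'd) monoid) j p \<beta>. zeta_extension B D d \<theta> A \<zeta> E j p \<beta>"
  then show "obs_vanishes B D d \<theta> A \<zeta> xs bx"
    using extension_imp_obs_vanishes[OF assms(1,2,4)] by blast
qed (use extension_imp_obs_vanishes[OF assms(1,2,4)] obs_vanishes_imp_extension[OF assms(1,2,4)]
  in blast)+

end
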